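(* Let $X$ be an infinite-dimensional Polish topological vector space and $T\in\mathfrak L(X)$. Assume there exists a $T$-invariant Borel probability measure $\mu$ on $X$ with full support such that $(X,\mathcal B,\mu,T)$ is a factor of an invertible measure-preserving dynamical system $(Y,\mathcal C,\nu,S)$ with Lebesgue spectrum. Then $T$ is hereditarily frequently hypercyclic. More precisely, for every countable family $(A_i)_{i\in I}$ of subsets of $\mathbb N$ with positive lower density and every family $(V_i)_{i\in I}$ of non-empty open subsets of $X$, $\mu$-almost every $x\in X$ is such that $\mathcal N_T(x,V_i)\cap A_i$ has positive lower density for every $i\in I$.
   Context: All probability spaces are standard Borel; $\mathcal B$ is the Borel $\sigma$-algebra of $X$. A measure-preserving dynamical system $(X,\mathcal B,\mu,T)$ is a factor of $(Y,\mathcal C,\nu,S)$ if, after removing null sets, there is a measurable $\pi:Y\to X$ with $\pi\circ S=T\circ\pi$ and $\nu\circ\pi^{-1}=\mu$. $(Y,\mathcal C,\nu,S)$ is invertible if $S$ is a bimeasurable bijection. It has Lebesgue spectrum if the Koopman operator $U_Sf=f\circ S$ restricted to $L^2_0(\nu)=\{f\in L^2(\nu):\int f\,d\nu=0\}$ admits a family $(f_i)$ such that $\{U_S^nf_i:n\in\mathbb Z,i\}$ is an orthonormal basis. $\mathcal N_T(x,V):=\{n\in\mathbb N:T^nx\in V\}$. Hereditarily frequently hypercyclic: for every countable family of non-empty open $V_i$ and sets $A_i\subset\mathbb N$ of positive lower density, some $x$ has $\mathcal N_T(x,V_i)\cap A_i$ of positive lower density for all $i$. *)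

theory Defs
  imports "HOL-Probability.Probability"
begin

definition polish_tvs :: "('a::{polish_space, real_vector}) itself \<Rightarrow> bool" where
  "polish_tvs _ \<longleftrightarrow>
     continuous_on UNIV (\<lambda>p::'a \<times> 'a. fst p + snd p) \<and>
     continuous_on UNIV (\<lambda>p::real \<times> 'a. fst p *\<^sub>R snd p)"

definition infinite_dimensional :: "('a::real_vector) itself \<Rightarrow> bool" where
  "infinite_dimensional _ \<longleftrightarrow> \<not> (\<exists>B::'a set. finite B \<and> span B = UNIV)"

definition lower_density :: "nat set \<Rightarrow> ereal" where
  "lower_density A = liminf (\<lambda>N. ereal (real (card (A \<inter> {1..N})) / real N))"

definition return_set :: "('a \<Rightarrow> 'a) \<Rightarrow> 'a \<Rightarrow> 'a set \<Rightarrow> nat set" where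
  "return_set T x V = {n. (T ^^ n) x \<in> V}"

definition hereditarily_frequently_hypercyclic :: "('a::topological_space \<Rightarrow> 'a) \<Rightarrow> bool" where
  "hereditarily_frequently_hypercyclic T \<longleftrightarrow>
     (\<forall>(I::nat set) (A::nat \<Rightarrow> nat set) (V::nat \<Rightarrow> 'a set).
        (\<forall>i\<in>I. open (V i) \<and> V i \<noteq> {} \<and> lower_density (A i) > 0) \<longrightarrow>
        (\<exists>x. \<forall>i\<in>I. lower_density (return_set T x (V i) \<inter> A i) > 0))"

definition mp_system :: "'a measure \<Rightarrow> ('a \<Rightarrow> 'a) \<Rightarrow> bool" where
  "mp_system M T \<longleftrightarrow> prob_space M \<and> T \<in> measurable M M \<and> distr M M T = M"

definition invertible_system :: "'a measure \<Rightarrow> ('a \<Rightarrow> 'a) \<Rightarrow> bool" where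
  "invertible_system M T \<longleftrightarrow> mp_system M T \<and> bij_betw T (space M) (space M) \<and>
     inv_into (space M) T \<in> measurable M M"

definition is_factor :: "'a measure \<Rightarrow> ('a \<Rightarrow> 'a) \<Rightarrow> 'b measure \<Rightarrow> ('b \<Rightarrow> 'b) \<Rightarrow> bool" where
  "is_factor M T N S \<longleftrightarrow>
     (\<exists>\<pi>. \<pi> \<in> measurable N M \<and> (AE y in N. \<pi> (S y) = T (\<pi> y)) \<and> distr N M \<pi> = M)"

definition ipow :: "'a measure \<Rightarrow> ('a \<Rightarrow> 'a) \<Rightarrow> int \<Rightarrow> 'a \<Rightarrow> 'a" where
  "ipow M S n = (if 0 \<le> n then S ^^ nat n else inv_into (space M) S ^^ nat (- n))"

definition L2 :: "'a measure \<Rightarrow> ('a \<Rightarrow> complex) \<Rightarrow> bool" where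
  "L2 M f \<longleftrightarrow> f \<in> borel_measurable M \<and> integrable M (\<lambda>y. (cmod (f y))\<^sup>2)"

definition L2_0 :: "'a measure \<Rightarrow> ('a \<Rightarrow> complex) \<Rightarrow> bool" where
  "L2_0 M f \<longleftrightarrow> L2 M f \<and> (\<integral>y. f y \<partial>M) = 0"

definition l2_inner :: "'a measure \<Rightarrow> ('a \<Rightarrow> complex) \<Rightarrow> ('a \<Rightarrow> complex) \<Rightarrow> complex" where
  "l2_inner M f g = (\<integral>y. f y * cnj (g y) \<partial>M)"

definition l2_dist :: "'a measure \<Rightarrow> ('a \<Rightarrow> complex) \<Rightarrow> ('a \<Rightarrow> complex) \<Rightarrow> real" where
  "l2_dist M f g = sqrt (\<integral>y. (cmod (f y - g y))\<^sup>2 \<partial>M)"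

text \<open>Lebesgue spectrum: there is a family F in L2_0 such that the functions f o S^n
  (f in F, n in Z) form an orthonormal basis of L2_0 (orthonormal system whose linear
  span is dense in L2_0).  The family is represented as a set: the members of an
  orthonormal family are automatically pairwise distinct.\<close>
definition lebesgue_spectrum :: "'a measure \<Rightarrow> ('a \<Rightarrow> 'a) \<Rightarrow> bool" where
  "lebesgue_spectrum M S \<longleftrightarrow>
     (\<exists>F::('a \<Rightarrow> complex) set.
        (\<forall>f\<in>F. L2_0 M f) \<and>
        (\<forall>f\<in>F. \<forall>g\<in>F. \<forall>n m::int.
            l2_inner M (f \<circ> ipow M S n) (g \<circ> ipow M S m) = (if f = g \<and> n = m then 1 else 0)) \<and>
        (\<forall>g. L2_0 M g \<longrightarrow> (\<forall>e>0. \<exists>P c. finite P \<and> P \<subseteq> F \<times> UNIV \<and>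
            l2_dist M g (\<lambda>y. \<Sum>(f, n)\<in>P. c (f, n) * f (ipow M S n y)) < e)))"

end

theory Submission
  imports Defs
begin

text \<open>Pull the question back along the factor map: visits of \<open>T\<^sup>n x\<close> to \<open>V\<close> are visits
  of \<open>S\<^sup>n y\<close> to \<open>W = \<pi>\<^sup>-\<^sup>1 V\<close>, and \<open>\<nu> W = \<mu> V > 0\<close>. Approximate the centred indicator
  \<open>h = 1\<^sub>W - \<nu> W\<close> in \<open>L\<^sup>2\<close> by a finite combination \<open>u\<close> of the orthonormal vectors
  \<open>f \<circ> S\<^sup>n\<close> supplied by the Lebesgue spectrum, with remainder \<open>r = h - u\<close>.
  Orthonormality gives \<open>\<parallel>\<Sum>\<^sub>m\<^sub>\<in>\<^sub>B u \<circ> S\<^sup>m\<parallel>\<^sup>2 \<le> K |B|\<close> for every finite \<open>B\<close>, so by Chebyshev and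
  Borel-Cantelli along \<open>N = 2\<^sup>k\<close> the sums of \<open>u\<close> over \<open>A \<inter> [1, N]\<close> are eventually \<open>o(N)\<close>
  almost surely. Hopf's maximal ergodic inequality makes the Cesaro means of \<open>|r|\<^sup>2\<close> small
  along the whole orbit outside a set of small measure. Off these exceptional sets the
  number of visits to \<open>W\<close> at times in \<open>A \<inter> [1, N]\<close> is at least half of
  \<open>\<nu> W \<cdot> |A \<inter> [1, N]|\<close> for large dyadic \<open>N\<close>, which forces positive lower density.\<close>

section \<open>Iterates of a measure-preserving map and the maximal ergodic inequality\<close>

lemma measurable_funpow:
  assumes "f \<in> measurable M M"
  shows "f ^^ n \<in> measurable M M"
  by (induction n) (auto intro: measurable_compose[OF _ assms])

lemma distr_funpow:
  assumes f: "f \<in> measurable M M" and inv: "distr M M f = M"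
  shows "distr M M (f ^^ n) = M"
proof (induction n)
  case (Suc n)
  have "distr M M (f ^^ Suc n) = distr (distr M M f) M (f ^^ n)"
    unfolding funpow_Suc_right by (rule distr_distr[symmetric]) (auto intro: f measurable_funpow)
  also have "\<dots> = M" using inv Suc by simp
  finally show ?case .
qed (simp add: distr_id2 id_def)

lemma
  fixes g :: "'a \<Rightarrow> 'b::{banach, second_countable_topology}"
  assumes f: "f \<in> measurable M M" and inv: "distr M M f = M" and g: "integrable M g"
  shows integrable_comp_measure_preserving: "integrable M (\<lambda>y. g (f y))"
    and integral_comp_measure_preserving: "(\<integral>y. g (f y) \<partial>M) = (\<integral>y. g y \<partial>M)"
proof -
  have gm: "g \<in> borel_measurable M" using g by simp
  show "integrable M (\<lambda>y. g (f y))"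
    using integrable_distr_eq[OF f gm] g inv by simp
  show "(\<integral>y. g (f y) \<partial>M) = (\<integral>y. g y \<partial>M)"
    using integral_distr[OF f gm] inv by simp
qed

definition birkhoff_sum :: "('a \<Rightarrow> 'a) \<Rightarrow> ('a \<Rightarrow> 'b::comm_monoid_add) \<Rightarrow> nat \<Rightarrow> 'a \<Rightarrow> 'b" where
  "birkhoff_sum S g k y = (\<Sum>n<k. g ((S ^^ n) y))"

lemma birkhoff_sum_0 [simp]: "birkhoff_sum S g 0 y = 0"
  by (simp add: birkhoff_sum_def)

lemma birkhoff_sum_Suc: "birkhoff_sum S g (Suc k) y = g y + birkhoff_sum S g k (S y)"
  unfolding birkhoff_sum_def
  by (subst sum.lessThan_Suc_shift) (simp add: funpow_Suc_right del: funpow.simps)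

lemma integrable_birkhoff_sum:
  fixes g :: "'a \<Rightarrow> 'b::{banach, second_countable_topology}"
  assumes "S \<in> measurable M M" "distr M M S = M" "integrable M g"
  shows "integrable M (birkhoff_sum S g k)"
proof -
  have "integrable M (\<lambda>y. g ((S ^^ n) y))" for n
    using assms by (intro integrable_comp_measure_preserving[OF measurable_funpow distr_funpow])
  then show ?thesis unfolding birkhoff_sum_def by simp
qed

primrec running_max :: "(nat \<Rightarrow> 'a \<Rightarrow> real) \<Rightarrow> nat \<Rightarrow> 'a \<Rightarrow> real" where
  "running_max F 0 y = F 0 y"
| "running_max F (Suc N) y = max (running_max F N y) (F (Suc N) y)"

lemma running_max_ge: "k \<le> N \<Longrightarrow> F k y \<le> running_max F N y"
  by (induction N) (auto simp: le_Suc_eq max_def)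

lemma running_max_attained: "\<exists>k\<le>N. running_max F N y = F k y"
  by (induction N) (auto simp: max_def intro: le_SucI)

lemma ex_running_max_pos_iff:
  assumes "F 0 y = 0"
  shows "(\<exists>N. 0 < running_max F N y) \<longleftrightarrow> (\<exists>N\<ge>1. 0 < F N y)"
proof
  assume "\<exists>N. 0 < running_max F N y"
  then obtain N k where "0 < running_max F N y" "running_max F N y = F k y"
    using running_max_attained[of _ F y] by metis
  then show "\<exists>N\<ge>1. 0 < F N y"
    using assms by (metis less_irrefl less_one not_le)
next
  assume "\<exists>N\<ge>1. 0 < F N y"
  then show "\<exists>N. 0 < running_max F N y"
    using running_max_ge[of _ _ F y] by (meson less_le_trans order_refl)
qed

lemma integrable_running_max:
  assumes "\<And>k. integrable M (F k)"
  shows "integrable M (running_max F N)"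
  by (induction N) (simp_all add: assms)

lemma maximal_ergodic_lemma:
  fixes g :: "'a \<Rightarrow> real" and S :: "'a \<Rightarrow> 'a" and N :: nat and M :: "'a measure"
  defines "E \<equiv> {y\<in>space M. 0 < running_max (birkhoff_sum S g) N y}"
  assumes S: "S \<in> measurable M M" "distr M M S = M" and g: "integrable M g"
  shows "0 \<le> (\<integral>y. indicator E y * g y \<partial>M)"
proof -
  let ?m = "running_max (birkhoff_sum S g) N"
  have m: "integrable M ?m"
    by (intro integrable_running_max integrable_birkhoff_sum S g)
  then have "?m \<in> borel_measurable M" by simp
  then have E: "E \<in> sets M" unfolding E_def by measurable
  have pointwise: "?m y - ?m (S y) \<le> indicator E y * g y" if y: "y \<in> space M" for y
  proof (cases "y \<in> E")
    case True
    then have pos: "0 < ?m y" by (simp add: E_def)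
    obtain k where k: "k \<le> N" "?m y = birkhoff_sum S g k y"
      using running_max_attained[of N "birkhoff_sum S g" y] by blast
    with pos have "k \<noteq> 0" by (intro notI) simp
    then obtain j where j: "k = Suc j" using not0_implies_Suc by blast
    have "birkhoff_sum S g j (S y) \<le> ?m (S y)"
      using k j running_max_ge[of j N "birkhoff_sum S g" "S y"] by simp
    moreover have "?m y = g y + birkhoff_sum S g j (S y)" using k j by (simp only: birkhoff_sum_Suc)
    ultimately show ?thesis using True by simp
  next
    case False
    then have "\<not> 0 < ?m y" using y by (simp add: E_def)
    \<comment> \<open>the empty Birkhoff sum makes \<open>?m\<close> nonnegative\<close>
    moreover have "0 \<le> ?m (S y)" using running_max_ge[of 0 N "birkhoff_sum S g" "S y"] by simp
    ultimately show ?thesis using False by simp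
  qed
  have mS: "integrable M (\<lambda>y. ?m (S y))"
    by (rule integrable_comp_measure_preserving[OF S m])
  have "0 = (\<integral>y. ?m y - ?m (S y) \<partial>M)"
    using integral_comp_measure_preserving[OF S m]
    by (simp add: Bochner_Integration.integral_diff[OF m mS])
  also have "\<dots> \<le> (\<integral>y. indicator E y * g y \<partial>M)"
  proof (rule integral_mono[OF _ _ pointwise])
    show "integrable M (\<lambda>y. ?m y - ?m (S y))" using m mS by simp
    show "integrable M (\<lambda>y. indicator E y * g y)"
      using integrable_real_mult_indicator[OF E g] by (simp add: mult.commute)
  qed
  finally show ?thesis .
qed

lemma birkhoff_sum_diff_const:
  fixes f :: "'a \<Rightarrow> real"
  shows "birkhoff_sum S (\<lambda>y. f y - l) k y = birkhoff_sum S f k y - l * real k"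
  by (simp add: birkhoff_sum_def sum_subtractf)

lemma maximal_ergodic_inequality:
  fixes f :: "'a \<Rightarrow> real"
  assumes M: "finite_measure M" and S: "S \<in> measurable M M" "distr M M S = M"
    and f: "integrable M f" "\<And>y. y \<in> space M \<Longrightarrow> 0 \<le> f y" and l: "0 < l"
  shows "measure M {y\<in>space M. \<exists>N\<ge>1. l * real N < birkhoff_sum S f N y} \<le> (\<integral>y. f y \<partial>M) / l"
proof -
  interpret finite_measure M by (rule M)
  define g where "g y = f y - l" for y
  have g: "integrable M g" unfolding g_def using f by simp
  define E where "E N = {y\<in>space M. 0 < running_max (birkhoff_sum S g) N y}" for N
  have E: "E N \<in> sets M" for N
  proof -
    have "integrable M (running_max (birkhoff_sum S g) N)"
      by (intro integrable_running_max integrable_birkhoff_sum[OF S g])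
    then show ?thesis unfolding E_def by measurable
  qed
  have E_le: "measure M (E N) \<le> (\<integral>y. f y \<partial>M) / l" for N
  proof -
    have fE: "integrable M (\<lambda>y. indicator (E N) y * f y)"
      using integrable_real_mult_indicator[OF E f(1)] by (simp add: mult.commute)
    have "0 \<le> (\<integral>y. indicator (E N) y * g y \<partial>M)"
      unfolding E_def by (rule maximal_ergodic_lemma[OF S g])
    also have "\<dots> = (\<integral>y. indicator (E N) y * f y \<partial>M) - l * measure M (E N)"
    proof -
      have "integrable M (\<lambda>y. indicator (E N) y * l)"
        using integrable_real_mult_indicator[OF E integrable_const] by (simp add: mult.commute)
      then show ?thesis
        using E unfolding g_def right_diff_distrib
        by (simp add: Bochner_Integration.integral_diff[OF fE])
    qed
    also have "(\<integral>y. indicator (E N) y * f y \<partial>M) \<le> (\<integral>y. f y \<partial>M)"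
      using fE f by (intro integral_mono) (auto simp: indicator_def)
    finally show ?thesis using l by (simp add: field_simps)
  qed
  have "incseq E"
    unfolding incseq_Suc_iff E_def by auto
  then have "(\<lambda>N. measure M (E N)) \<longlonglongrightarrow> measure M (\<Union>N. E N)"
    using E by (intro finite_Lim_measure_incseq) auto
  then have "measure M (\<Union>N. E N) \<le> (\<integral>y. f y \<partial>M) / l"
    using E_le by (intro LIMSEQ_le_const2) auto
  moreover have "(\<Union>N. E N) = {y\<in>space M. \<exists>N\<ge>1. l * real N < birkhoff_sum S f N y}"
    using ex_running_max_pos_iff[of "birkhoff_sum S g"]
    unfolding E_def g_def birkhoff_sum_diff_const by auto
  ultimately show ?thesis by simp
qed

lemma orbit_square_means_le_outside_small_set:
  assumes M: "finite_measure M" and S: "S \<in> measurable M M" "distr M M S = M"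
    and r: "L2 M r" and t: "0 < t"
  obtains E where "E \<in> sets M" "measure M E \<le> (\<integral>y. (cmod (r y))\<^sup>2 \<partial>M) / t\<^sup>2"
    "\<And>y N. y \<in> space M \<Longrightarrow> y \<notin> E \<Longrightarrow> (\<Sum>n<N. (cmod (r ((S ^^ n) y)))\<^sup>2) \<le> t\<^sup>2 * real N"
proof
  have [measurable]: "(S ^^ n) \<in> measurable M M" for n
    by (rule measurable_funpow[OF S(1)])
  have [measurable]: "r \<in> borel_measurable M" using r by (simp add: L2_def)
  define E where "E = {y\<in>space M. \<exists>N\<ge>1. t\<^sup>2 * real N < birkhoff_sum S (\<lambda>y. (cmod (r y))\<^sup>2) N y}"
  show "E \<in> sets M"
    unfolding E_def birkhoff_sum_def by measurable
  show "measure M E \<le> (\<integral>y. (cmod (r y))\<^sup>2 \<partial>M) / t\<^sup>2"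
    unfolding E_def using r t
    by (intro maximal_ergodic_inequality[OF M S]) (auto simp: L2_def)
  show "(\<Sum>n<N. (cmod (r ((S ^^ n) y)))\<^sup>2) \<le> t\<^sup>2 * real N" if "y \<in> space M" "y \<notin> E" for y N
    using that by (cases "N = 0") (auto simp: E_def birkhoff_sum_def not_less)
qed

lemma lower_density_pos_imp_eventually_ge:
  assumes "0 < lower_density A"
  obtains \<delta> N0 where "0 < \<delta>" "\<And>N. N \<ge> N0 \<Longrightarrow> \<delta> * real N \<le> real (card (A \<inter> {1..N}))"
proof -
  obtain \<delta> where \<delta>: "0 < ereal \<delta>" "ereal \<delta> < lower_density A"
    using ereal_dense2[OF assms] by blast
  have "\<forall>y<lower_density A.
      eventually (\<lambda>N. y < ereal (real (card (A \<inter> {1..N})) / real N)) sequentially"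
    unfolding lower_density_def by (rule le_Liminf_iff[THEN iffD1]) simp
  with \<delta> have "eventually (\<lambda>N. ereal \<delta> < ereal (real (card (A \<inter> {1..N})) / real N)) sequentially"
    by blast
  then obtain N0 where N0: "\<And>N. N \<ge> N0 \<Longrightarrow> \<delta> < real (card (A \<inter> {1..N})) / real N"
    unfolding eventually_sequentially by auto
  have "\<delta> * real N \<le> real (card (A \<inter> {1..N}))" if "N \<ge> N0" for N
    using N0[OF that] by (cases "N = 0") (simp_all add: field_simps)
  moreover have "0 < \<delta>" using \<delta>(1) by simp
  ultimately show ?thesis using that by blast
qed

lemma lower_density_pos_if_dyadic_bound:
  assumes c: "0 < c" and bound: "\<And>k. k \<ge> K \<Longrightarrow> c * 2 ^ k \<le> real (card (E \<inter> {1..2 ^ k}))"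
  shows "0 < lower_density E"
proof -
  have "ereal (c / 2) \<le> lower_density E"
    unfolding lower_density_def
  proof (rule Liminf_bounded, unfold eventually_sequentially, intro exI allI impI)
    fix N :: nat
    assume N: "2 ^ K \<le> N"
    then have "1 \<le> N" using one_le_power[of "2::nat" K] by linarith
    then obtain k where k: "2 ^ k \<le> N" "N < 2 ^ (k + 1)"
      using ex_power_ivl1[of 2 N] by auto
    have "K \<le> k"
    proof (rule ccontr)
      assume "\<not> K \<le> k"
      then have "(2::nat) ^ (k + 1) \<le> 2 ^ K" by (intro power_increasing) auto
      with k N show False by linarith
    qed
    have "real N \<le> 2 ^ (k + 1)"
      using k(2) by (metis less_imp_le of_nat_le_iff of_nat_numeral of_nat_power)
    then have "c / 2 * real N \<le> c * 2 ^ k"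
      using c by (simp add: field_simps)
    also have "\<dots> \<le> real (card (E \<inter> {1..2 ^ k}))" using bound[OF \<open>K \<le> k\<close>] .
    also have "\<dots> \<le> real (card (E \<inter> {1..N}))"
      using k by (intro of_nat_mono card_mono) auto
    finally show "ereal (c / 2) \<le> ereal (real (card (E \<inter> {1..N})) / real N)"
      using \<open>1 \<le> N\<close> by (simp add: field_simps)
  qed
  moreover have "(0::ereal) < ereal (c / 2)" using c by simp
  ultimately show ?thesis by (meson less_le_trans)
qed

section \<open>Square-integrable functions and Lebesgue spectrum\<close>

lemma L2_add:
  assumes f: "L2 M f" and g: "L2 M g"
  shows "L2 M (\<lambda>y. f y + g y)"
proof -
  have fm: "f \<in> borel_measurable M" and gm: "g \<in> borel_measurable M"
    using f g by (simp_all add: L2_def)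
  have bound: "integrable M (\<lambda>y. 2 * (cmod (f y))\<^sup>2 + 2 * (cmod (g y))\<^sup>2)"
    using f g by (simp add: L2_def)
  have meas: "(\<lambda>y. (cmod (f y + g y))\<^sup>2) \<in> borel_measurable M"
    using fm gm by measurable
  have "norm ((cmod (f y + g y))\<^sup>2) \<le> norm (2 * (cmod (f y))\<^sup>2 + 2 * (cmod (g y))\<^sup>2)" for y
  proof -
    have "(cmod (f y + g y))\<^sup>2 \<le> (cmod (f y) + cmod (g y))\<^sup>2"
      by (intro power_mono norm_triangle_ineq) simp
    also have "\<dots> \<le> 2 * (cmod (f y))\<^sup>2 + 2 * (cmod (g y))\<^sup>2"
      using sum_squares_bound[of "cmod (f y)" "cmod (g y)"] by (simp add: power2_sum)
    finally show ?thesis by (simp add: abs_of_nonneg)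
  qed
  then have "integrable M (\<lambda>y. (cmod (f y + g y))\<^sup>2)"
    by (intro Bochner_Integration.integrable_bound[OF bound meas] AE_I2)
  then show ?thesis using fm gm by (simp add: L2_def)
qed

lemma L2_cmult:
  assumes "L2 M f"
  shows "L2 M (\<lambda>y. a * f y)"
proof -
  have "f \<in> borel_measurable M" using assms by (simp add: L2_def)
  then have "(\<lambda>y. a * f y) \<in> borel_measurable M" by measurable
  then show ?thesis using assms by (simp add: L2_def norm_mult power_mult_distrib)
qed

lemma L2_sum:
  assumes "finite P" "\<And>p. p \<in> P \<Longrightarrow> L2 M (f p)"
  shows "L2 M (\<lambda>y. \<Sum>p\<in>P. f p y)"
  using assms
proof (induction P rule: finite_induct)
  case empty
  then show ?case by (simp add: L2_def)
next
  case (insert p P)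
  then show ?case using L2_add[of M "f p" "\<lambda>y. \<Sum>p\<in>P. f p y"] by simp
qed

lemma L2_diff:
  assumes "L2 M f" "L2 M g"
  shows "L2 M (\<lambda>y. f y - g y)"
  using L2_add[OF assms(1) L2_cmult[OF assms(2), of "-1"]] by simp

lemma L2_bounded:
  assumes "finite_measure M" "f \<in> borel_measurable M" "\<And>y. y \<in> space M \<Longrightarrow> cmod (f y) \<le> B"
  shows "L2 M f"
proof -
  interpret finite_measure M by (rule assms(1))
  have "(cmod (f y))\<^sup>2 \<le> B\<^sup>2" if "y \<in> space M" for y
    using assms(3)[OF that] by (intro power_mono) auto
  then have "integrable M (\<lambda>y. (cmod (f y))\<^sup>2)"
    using assms(2) by (intro integrable_const_bound[where B="B\<^sup>2"]) auto
  then show ?thesis using assms(2) by (simp add: L2_def)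
qed

lemma integrable_mult_cnj_L2:
  assumes f: "L2 M f" and g: "L2 M g"
  shows "integrable M (\<lambda>y. f y * cnj (g y))"
proof (rule Bochner_Integration.integrable_bound)
  show "integrable M (\<lambda>y. (cmod (f y))\<^sup>2 + (cmod (g y))\<^sup>2)"
    using f g by (simp add: L2_def)
  have "g \<in> borel_measurable M" using g by (simp add: L2_def)
  then have "(\<lambda>y. cnj (g y)) \<in> borel_measurable M"
    by (rule borel_measurable_continuous_on[OF linear_continuous_on[OF bounded_linear_cnj]])
  then show "(\<lambda>y. f y * cnj (g y)) \<in> borel_measurable M"
    using f unfolding L2_def by (intro borel_measurable_times) auto
  have "cmod (f y) * cmod (g y) \<le> (cmod (f y))\<^sup>2 + (cmod (g y))\<^sup>2" for y
    using sum_squares_bound[of "cmod (f y)" "cmod (g y)"]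
      mult_nonneg_nonneg[OF norm_ge_zero norm_ge_zero, of "f y" "g y"]
    by linarith
  then show "AE y in M. norm (f y * cnj (g y)) \<le> norm ((cmod (f y))\<^sup>2 + (cmod (g y))\<^sup>2)"
    by (intro AE_I2) (simp add: norm_mult)
qed

lemma L2_if_l2_inner_self_eq_1:
  assumes m: "f \<in> borel_measurable M" and norm1: "l2_inner M f f = 1"
  shows "L2 M f"
proof -
  have "integrable M (\<lambda>y. f y * cnj (f y))"
    using norm1 not_integrable_integral_eq unfolding l2_inner_def by fastforce
  then have "integrable M (\<lambda>y. Re (complex_of_real ((cmod (f y))\<^sup>2)))"
    unfolding complex_norm_square by (rule integrable_bounded_linear[OF bounded_linear_Re])
  then show ?thesis using m by (simp add: L2_def)
qed

lemma integral_norm_sum_orthonormal: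
  assumes B: "finite B" and L2: "\<And>i. i \<in> B \<Longrightarrow> L2 M (\<phi> i)"
    and orthonormal: "\<And>i j. i \<in> B \<Longrightarrow> j \<in> B \<Longrightarrow> l2_inner M (\<phi> i) (\<phi> j) = (if i = j then 1 else 0)"
  shows "(\<integral>y. (cmod (\<Sum>i\<in>B. \<phi> i y))\<^sup>2 \<partial>M) = real (card B)"
proof -
  have prod: "integrable M (\<lambda>y. \<phi> i y * cnj (\<phi> j y))" if "i \<in> B" "j \<in> B" for i j
    using integrable_mult_cnj_L2[OF L2 L2] that .
  have "complex_of_real (\<integral>y. (cmod (\<Sum>i\<in>B. \<phi> i y))\<^sup>2 \<partial>M)
      = (\<integral>y. (\<Sum>i\<in>B. \<Sum>j\<in>B. \<phi> i y * cnj (\<phi> j y)) \<partial>M)"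
    by (simp only: integral_complex_of_real[symmetric] complex_norm_square cnj_sum sum_product)
  also have "\<dots> = (\<Sum>i\<in>B. \<integral>y. (\<Sum>j\<in>B. \<phi> i y * cnj (\<phi> j y)) \<partial>M)"
    using prod by (intro Bochner_Integration.integral_sum integrable_sum) auto
  also have "\<dots> = (\<Sum>i\<in>B. \<Sum>j\<in>B. l2_inner M (\<phi> i) (\<phi> j))"
    unfolding l2_inner_def using prod
    by (intro sum.cong refl Bochner_Integration.integral_sum) auto
  also have "\<dots> = (\<Sum>i\<in>B. 1)"
    using B orthonormal by (intro sum.cong refl) simp
  also have "\<dots> = complex_of_real (real (card B))" by simp
  finally show ?thesis by (simp only: of_real_eq_iff)
qed

lemma integral_norm_sum_le:
  assumes P: "finite P" and L2: "\<And>p. p \<in> P \<Longrightarrow> L2 M (\<psi> p)"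
  shows "(\<integral>y. (cmod (\<Sum>p\<in>P. c p * \<psi> p y))\<^sup>2 \<partial>M)
    \<le> real (card P) * (\<Sum>p\<in>P. (cmod (c p))\<^sup>2 * (\<integral>y. (cmod (\<psi> p y))\<^sup>2 \<partial>M))"
proof -
  have "(\<integral>y. (cmod (\<Sum>p\<in>P. c p * \<psi> p y))\<^sup>2 \<partial>M)
      \<le> (\<integral>y. real (card P) * (\<Sum>p\<in>P. (cmod (c p))\<^sup>2 * (cmod (\<psi> p y))\<^sup>2) \<partial>M)"
  proof (rule integral_mono)
    show "integrable M (\<lambda>y. (cmod (\<Sum>p\<in>P. c p * \<psi> p y))\<^sup>2)"
      using L2_sum[OF P L2_cmult[OF L2]] by (simp add: L2_def)
    show "integrable M (\<lambda>y. real (card P) * (\<Sum>p\<in>P. (cmod (c p))\<^sup>2 * (cmod (\<psi> p y))\<^sup>2))"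
      using L2 by (auto simp: L2_def)
    fix y
    have "(cmod (\<Sum>p\<in>P. c p * \<psi> p y))\<^sup>2 \<le> (\<Sum>p\<in>P. cmod (c p * \<psi> p y))\<^sup>2"
      by (intro power_mono norm_sum) simp
    also have "\<dots> \<le> (\<Sum>p\<in>P. (cmod (c p * \<psi> p y))\<^sup>2) * real (card P)"
      by (rule sum_squared_le_sum_of_squares)
    finally show "(cmod (\<Sum>p\<in>P. c p * \<psi> p y))\<^sup>2
        \<le> real (card P) * (\<Sum>p\<in>P. (cmod (c p))\<^sup>2 * (cmod (\<psi> p y))\<^sup>2)"
      by (simp add: norm_mult power_mult_distrib mult.commute)
  qed
  also have "\<dots> = real (card P) * (\<Sum>p\<in>P. (cmod (c p))\<^sup>2 * (\<integral>y. (cmod (\<psi> p y))\<^sup>2 \<partial>M))"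
    using L2 by (simp add: L2_def Bochner_Integration.integral_sum)
  finally show ?thesis .
qed

lemma ipow_shift:
  assumes S: "bij_betw S (space M) (space M)" and y: "y \<in> space M"
  shows "ipow M S n (S y) = ipow M S (n + 1) y"
proof (cases "0 \<le> n")
  case True
  then have "nat (n + 1) = Suc (nat n)" by simp
  with True show ?thesis
    by (simp add: ipow_def funpow_Suc_right del: funpow.simps)
next
  case False
  then obtain j where j: "nat (- n) = Suc j" "nat (- (n + 1)) = j"
    by (intro that[of "nat (- n - 1)"]) auto
  have "inv_into (space M) S (S y) = y"
    using S y by (simp add: bij_betw_def inv_into_f_f)
  then show ?thesis
    using False j by (cases "n = -1") (simp_all add: ipow_def funpow_Suc_right del: funpow.simps)
qed

lemma ipow_funpow:
  assumes S: "bij_betw S (space M) (space M)" and y: "y \<in> space M"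
  shows "ipow M S n ((S ^^ m) y) = ipow M S (n + int m) y"
  using y
proof (induction m arbitrary: y n)
  case (Suc m)
  have "S y \<in> space M" using S Suc.prems by (auto simp: bij_betw_def)
  then have "ipow M S n ((S ^^ m) (S y)) = ipow M S (n + int m) (S y)" by (rule Suc.IH)
  then show ?case
    using ipow_shift[OF S Suc.prems] by (simp add: funpow_Suc_right add_ac del: funpow.simps)
qed simp

lemma measurable_ipow:
  assumes "S \<in> measurable M M" "inv_into (space M) S \<in> measurable M M"
  shows "ipow M S n \<in> measurable M M"
  using assms by (simp add: ipow_def measurable_funpow)

text \<open>The only consequence of Lebesgue spectrum that the density estimate uses: up to a small
  error in \<open>L\<^sup>2\<close>, the centred indicator of a set has orbit sums over any \<open>n\<close> times of
  variance \<open>O(n)\<close>, as if its iterates were orthogonal.\<close>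
definition orbit_sums_variance_le :: "'a measure \<Rightarrow> ('a \<Rightarrow> 'a) \<Rightarrow> ('a \<Rightarrow> complex) \<Rightarrow> real \<Rightarrow> bool" where
  "orbit_sums_variance_le M S u K \<longleftrightarrow>
     (\<forall>B. finite B \<longrightarrow> integrable M (\<lambda>y. (cmod (\<Sum>m\<in>B. u ((S ^^ m) y)))\<^sup>2) \<and>
        (\<integral>y. (cmod (\<Sum>m\<in>B. u ((S ^^ m) y)))\<^sup>2 \<partial>M) \<le> K * real (card B))"

lemma orbit_sums_variance_le_orthonormal_combination:
  fixes P :: "(('a \<Rightarrow> complex) \<times> int) set" and c :: "('a \<Rightarrow> complex) \<times> int \<Rightarrow> complex"
  assumes S: "bij_betw S (space M) (space M)" and P: "finite P"
    and L2: "\<And>f n k. (f, n) \<in> P \<Longrightarrow> L2 M (f \<circ> ipow M S k)"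
    and orthonormal: "\<And>f n k l. (f, n) \<in> P \<Longrightarrow>
      l2_inner M (f \<circ> ipow M S k) (f \<circ> ipow M S l) = (if k = l then 1 else 0)"
  shows "orbit_sums_variance_le M S (\<lambda>y. \<Sum>(f, n)\<in>P. c (f, n) * f (ipow M S n y))
           (real (card P) * (\<Sum>p\<in>P. (cmod (c p))\<^sup>2))"
  unfolding orbit_sums_variance_le_def
proof (intro allI impI)
  fix B :: "nat set"
  assume B: "finite B"
  define \<psi> where "\<psi> p y = (\<Sum>m\<in>B. fst p (ipow M S (snd p + int m) y))"
    for p :: "('a \<Rightarrow> complex) \<times> int" and y
  let ?u = "\<lambda>y. \<Sum>(f, n)\<in>P. c (f, n) * f (ipow M S n y)"
  have sum_eq: "(\<Sum>m\<in>B. ?u ((S ^^ m) y)) = (\<Sum>p\<in>P. c p * \<psi> p y)" if "y \<in> space M" for y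
    unfolding \<psi>_def using ipow_funpow[OF S that]
    by (simp add: split_beta sum_distrib_left sum.swap[of _ B])
  have \<psi>_L2: "L2 M (\<psi> p)" if "p \<in> P" for p
    unfolding \<psi>_def using L2[of "fst p" "snd p"] that B
    by (intro L2_sum) (auto simp: comp_def)
  have \<psi>_norm: "(\<integral>y. (cmod (\<psi> p y))\<^sup>2 \<partial>M) = real (card B)" if "p \<in> P" for p
    unfolding \<psi>_def using L2[of "fst p" "snd p"] orthonormal[of "fst p" "snd p"] that
    by (intro integral_norm_sum_orthonormal[OF B]) (auto simp: comp_def)
  have comb_L2: "L2 M (\<lambda>y. \<Sum>p\<in>P. c p * \<psi> p y)"
    using P \<psi>_L2 by (intro L2_sum L2_cmult)
  have int_eq: "integrable M (\<lambda>y. (cmod (\<Sum>m\<in>B. ?u ((S ^^ m) y)))\<^sup>2)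
      \<longleftrightarrow> integrable M (\<lambda>y. (cmod (\<Sum>p\<in>P. c p * \<psi> p y))\<^sup>2)"
    by (rule Bochner_Integration.integrable_cong) (simp_all add: sum_eq)
  have "(\<integral>y. (cmod (\<Sum>m\<in>B. ?u ((S ^^ m) y)))\<^sup>2 \<partial>M) = (\<integral>y. (cmod (\<Sum>p\<in>P. c p * \<psi> p y))\<^sup>2 \<partial>M)"
    by (rule Bochner_Integration.integral_cong) (simp_all add: sum_eq)
  also have "\<dots> \<le> real (card P) * (\<Sum>p\<in>P. (cmod (c p))\<^sup>2 * real (card B))"
    using integral_norm_sum_le[OF P \<psi>_L2, where c=c] \<psi>_norm by simp
  finally show "integrable M (\<lambda>y. (cmod (\<Sum>m\<in>B. ?u ((S ^^ m) y)))\<^sup>2) \<and>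
      (\<integral>y. (cmod (\<Sum>m\<in>B. ?u ((S ^^ m) y)))\<^sup>2 \<partial>M)
        \<le> real (card P) * (\<Sum>p\<in>P. (cmod (c p))\<^sup>2) * real (card B)"
    using int_eq comb_L2 by (simp add: L2_def sum_distrib_right mult.assoc)
qed

lemma lebesgue_spectrum_approx:
  assumes S: "invertible_system M S" and leb: "lebesgue_spectrum M S"
    and h: "L2_0 M h" and e: "0 < e"
  obtains u K where "L2 M u" "(\<integral>y. (cmod (h y - u y))\<^sup>2 \<partial>M) < e" "orbit_sums_variance_le M S u K"
proof -
  have S_bij: "bij_betw S (space M) (space M)"
    and S_meas: "S \<in> measurable M M" "inv_into (space M) S \<in> measurable M M"
    using S by (auto simp: invertible_system_def mp_system_def)
  obtain F where F: "\<forall>f\<in>F. L2_0 M f"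
    and orthonormal: "\<forall>f\<in>F. \<forall>g\<in>F. \<forall>n m::int.
      l2_inner M (f \<circ> ipow M S n) (g \<circ> ipow M S m) = (if f = g \<and> n = m then 1 else 0)"
    and dense: "\<forall>g. L2_0 M g \<longrightarrow> (\<forall>e>0. \<exists>P c. finite P \<and> P \<subseteq> F \<times> UNIV \<and>
      l2_dist M g (\<lambda>y. \<Sum>(f, n)\<in>P. c (f, n) * f (ipow M S n y)) < e)"
    using leb unfolding lebesgue_spectrum_def by blast
  obtain P c where P: "finite P" "P \<subseteq> F \<times> UNIV"
    and close: "l2_dist M h (\<lambda>y. \<Sum>(f, n)\<in>P. c (f, n) * f (ipow M S n y)) < sqrt e"
    using dense h e by (meson real_sqrt_gt_zero)
  define u where "u y = (\<Sum>(f, n)\<in>P. c (f, n) * f (ipow M S n y))" for y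
  have L2_shift: "L2 M (f \<circ> ipow M S k)" if "f \<in> F" for f k
  proof (rule L2_if_l2_inner_self_eq_1)
    have "f \<in> borel_measurable M" using F that by (simp add: L2_0_def L2_def)
    then show "f \<circ> ipow M S k \<in> borel_measurable M"
      using measurable_ipow[OF S_meas] by (simp add: measurable_comp)
    show "l2_inner M (f \<circ> ipow M S k) (f \<circ> ipow M S k) = 1"
      using orthonormal that by simp
  qed
  have "L2 M u"
    unfolding u_def split_beta using P L2_shift
    by (intro L2_sum L2_cmult) (auto simp: comp_def)
  moreover have "(\<integral>y. (cmod (h y - u y))\<^sup>2 \<partial>M) < e"
    using close unfolding u_def l2_dist_def by (simp add: real_sqrt_less_iff)
  moreover have "orbit_sums_variance_le M S u (real (card P) * (\<Sum>p\<in>P. (cmod (c p))\<^sup>2))"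
    unfolding u_def using P L2_shift orthonormal
    by (intro orbit_sums_variance_le_orthonormal_combination[OF S_bij]) auto
  ultimately show ?thesis by (rule that)
qed

section \<open>Visits along a set of positive lower density\<close>

lemma AE_if_exceptional_sets_small:
  assumes M: "finite_measure M"
    and small: "\<And>\<eta>. 0 < \<eta> \<Longrightarrow> \<exists>Z\<in>sets M. measure M Z \<le> \<eta> \<and> {y\<in>space M. \<not> Q y} \<subseteq> Z"
  shows "AE y in M. Q y"
proof -
  interpret finite_measure M by (rule M)
  obtain Z where Z: "\<And>j. Z j \<in> sets M" "\<And>j. measure M (Z j) \<le> 1 / real (Suc j)"
    "\<And>j. {y\<in>space M. \<not> Q y} \<subseteq> Z j"
    using small[of "1 / real (Suc _)"]
    by (metis of_nat_0_less_iff zero_less_Suc zero_less_divide_1_iff)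
  have "measure M (\<Inter>j. Z j) \<le> 1 / real (Suc j)" for j
    using finite_measure_mono[of "\<Inter>j. Z j" "Z j"] Z(1) Z(2)[of j] by (auto intro: order_trans)
  then have "measure M (\<Inter>j. Z j) \<le> 0"
    by (intro LIMSEQ_le_const[OF LIMSEQ_Suc[OF lim_inverse_n']]) (simp add: inverse_eq_divide)
  then have "(\<Inter>j. Z j) \<in> null_sets M"
    using Z(1) by (auto simp: emeasure_eq_measure measure_le_0_iff)
  then show ?thesis
    using Z(3) by (intro AE_I'[of "\<Inter>j. Z j"]) auto
qed

lemma sum_le_if_sum_squares_le:
  fixes a :: "'i \<Rightarrow> real"
  assumes t: "0 \<le> t" and squares: "(\<Sum>i\<in>I. (a i)\<^sup>2) \<le> t\<^sup>2 * real (card I)"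
  shows "(\<Sum>i\<in>I. a i) \<le> t * real (card I)"
proof (rule power2_le_imp_le)
  have "(\<Sum>i\<in>I. a i)\<^sup>2 \<le> (\<Sum>i\<in>I. (a i)\<^sup>2) * real (card I)"
    by (rule sum_squared_le_sum_of_squares)
  also have "\<dots> \<le> t\<^sup>2 * real (card I) * real (card I)"
    using squares by (intro mult_right_mono) auto
  finally show "(\<Sum>i\<in>I. a i)\<^sup>2 \<le> (t * real (card I))\<^sup>2"
    by (simp add: power2_eq_square mult_ac)
  show "0 \<le> t * real (card I)" using t by simp
qed

lemma card_Int_eq_sum_indicator:
  assumes "finite B"
  shows "real (card (R \<inter> B)) = (\<Sum>m\<in>B. indicator R m)"
  using assms by (simp add: indicator_def sum.If_cases Int_commute)

lemma sum_ge_of_decomposition: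
  fixes x :: "nat \<Rightarrow> real" and u r :: "nat \<Rightarrow> complex" and A :: "nat set" and N :: nat
    and c \<delta> :: real
  defines "B \<equiv> A \<inter> {1..N}" and "t \<equiv> c * \<delta> / 12"
  assumes x: "\<And>m. x m = c + Re (u m) + Re (r m)" and c: "0 < c" and \<delta>: "0 < \<delta>" and N: "1 \<le> N"
    and dense: "\<delta> * real N \<le> real (card B)"
    and u: "cmod (\<Sum>m\<in>B. u m) \<le> t * real N"
    and r: "(\<Sum>n<N+1. (cmod (r n))\<^sup>2) \<le> t\<^sup>2 * real (N + 1)"
  shows "c * \<delta> / 2 * real N \<le> (\<Sum>m\<in>B. x m)"
proof -
  have t: "0 \<le> t" using c \<delta> by (simp add: t_def)
  have "(\<Sum>m\<in>B. cmod (r m)) \<le> (\<Sum>n<N+1. cmod (r n))"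
    by (rule sum_mono2) (auto simp: B_def)
  also have "\<dots> \<le> t * real (N + 1)"
    using sum_le_if_sum_squares_le[OF t, of "\<lambda>n. cmod (r n)" "{..<N+1}"] r by simp
  finally have r_sum: "(\<Sum>m\<in>B. cmod (r m)) \<le> t * real (N + 1)" .
  have "c * real (card B) - cmod (\<Sum>m\<in>B. u m) - (\<Sum>m\<in>B. cmod (r m)) \<le> (\<Sum>m\<in>B. x m)"
  proof -
    have "- cmod (\<Sum>m\<in>B. u m) \<le> (\<Sum>m\<in>B. Re (u m))"
      using abs_Re_le_cmod[of "\<Sum>m\<in>B. u m"] by (simp add: Re_sum)
    moreover have "(\<Sum>m\<in>B. - cmod (r m)) \<le> (\<Sum>m\<in>B. Re (r m))"
      using abs_Re_le_cmod by (intro sum_mono) (metis abs_le_iff minus_le_iff)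
    ultimately show ?thesis
      by (simp add: x sum.distrib sum_negf)
  qed
  moreover have "c * \<delta> * real N \<le> c * real (card B)"
    using mult_left_mono[OF dense, of c] c by (simp add: mult.assoc)
  moreover have "t * real (N + 1) \<le> 2 * (t * real N)"
    using mult_left_mono[of 1 "real N" t] N t by (simp add: algebra_simps)
  moreover have "3 * (t * real N) = (c * \<delta> * real N) / 4"
    by (simp add: t_def)
  moreover have "0 \<le> c * \<delta> * real N" using c \<delta> by simp
  moreover have "c * \<delta> / 2 * real N = (c * \<delta> * real N) / 2" by simp
  ultimately show ?thesis
    using u r_sum by linarith
qed

lemma measure_orbit_sum_gt_le:
  assumes M: "finite_measure M" and var: "orbit_sums_variance_le M S u K"
    and B: "finite B" and s: "0 < s"
  shows "measure M {y\<in>space M. s < cmod (\<Sum>m\<in>B. u ((S ^^ m) y))} \<le> K * real (card B) / s\<^sup>2"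
proof -
  let ?X = "\<lambda>y. (cmod (\<Sum>m\<in>B. u ((S ^^ m) y)))\<^sup>2"
  have X: "integrable M ?X" "(\<integral>y. ?X y \<partial>M) \<le> K * real (card B)"
    using var B by (auto simp: orbit_sums_variance_le_def)
  have "{y\<in>space M. s < cmod (\<Sum>m\<in>B. u ((S ^^ m) y))} \<subseteq> {y\<in>space M. s\<^sup>2 \<le> ?X y}"
    using s by (auto intro: power_mono)
  then have "measure M {y\<in>space M. s < cmod (\<Sum>m\<in>B. u ((S ^^ m) y))}
      \<le> measure M {y\<in>space M. s\<^sup>2 \<le> ?X y}"
    using X(1) by (intro finite_measure.finite_measure_mono[OF M]) auto
  also have "\<dots> \<le> (\<integral>y. ?X y \<partial>M) / s\<^sup>2"
    using X(1) s by (intro integral_Markov_inequality_measure[where A="{}"]) auto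
  also have "\<dots> \<le> K * real (card B) / s\<^sup>2"
    using X(2) by (simp add: divide_right_mono)
  finally show ?thesis .
qed

lemma AE_eventually_dyadic_orbit_sums_le:
  assumes M: "finite_measure M" and S: "S \<in> measurable M M" and u: "u \<in> borel_measurable M"
    and var: "orbit_sums_variance_le M S u K" and t: "0 < t"
  shows "AE y in M. eventually
    (\<lambda>k. cmod (\<Sum>m\<in>A \<inter> {1..2 ^ k}. u ((S ^^ m) y)) \<le> t * 2 ^ k) sequentially"
proof -
  interpret finite_measure M by (rule M)
  define D where "D k = {y\<in>space M. t * 2 ^ k < cmod (\<Sum>m\<in>A \<inter> {1..2 ^ k}. u ((S ^^ m) y))}" for k
  have [measurable]: "(S ^^ m) \<in> measurable M M" for m
    by (rule measurable_funpow[OF S])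
  have D: "D k \<in> sets M" for k
    unfolding D_def using u by measurable
  have D_le: "measure M (D k) \<le> (max K 0 / t\<^sup>2) * (1 / 2) ^ k" for k
  proof -
    have "real (card (A \<inter> {1..2 ^ k})) \<le> 2 ^ k"
      using card_mono[of "{1..2 ^ k}" "A \<inter> {1..2 ^ k}"] by simp
    then have card: "K * real (card (A \<inter> {1..2 ^ k})) \<le> max K 0 * 2 ^ k"
      by (intro mult_mono) auto
    have "measure M (D k) \<le> K * real (card (A \<inter> {1..2 ^ k})) / (t * 2 ^ k)\<^sup>2"
      unfolding D_def using t by (intro measure_orbit_sum_gt_le[OF M var]) auto
    also have "\<dots> \<le> max K 0 * 2 ^ k / (t * 2 ^ k)\<^sup>2"
      using card by (intro divide_right_mono) auto
    also have "\<dots> = (max K 0 / t\<^sup>2) * (1 / 2) ^ k"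
      by (simp add: power_mult_distrib power_one_over power2_eq_square)
    finally show ?thesis .
  qed
  have "summable (\<lambda>k. measure M (D k))"
  proof (rule summable_comparison_test')
    show "summable (\<lambda>k. (max K 0 / t\<^sup>2) * (1 / 2 :: real) ^ k)"
      by (intro summable_mult summable_geometric) simp
    show "norm (measure M (D k)) \<le> (max K 0 / t\<^sup>2) * (1 / 2) ^ k" for k
      using D_le[of k] by simp
  qed
  then have "AE y in M. eventually (\<lambda>k. y \<in> space M - D k) sequentially"
    using D by (intro borel_cantelli_AE1) (auto simp: emeasure_eq_measure)
  then show ?thesis
    by (rule AE_mp) (auto intro!: AE_I2 elim!: eventually_mono simp: D_def not_less)
qed

lemma L2_0_centered_indicator:
  assumes M: "prob_space M" and W: "W \<in> sets M"
  shows "L2_0 M (\<lambda>y. complex_of_real (indicator W y - measure M W))"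
proof -
  interpret prob_space M by (rule M)
  have meas: "(\<lambda>y. complex_of_real (indicator W y - measure M W)) \<in> borel_measurable M"
    using W by measurable
  have "cmod (complex_of_real (indicator W y - measure M W)) \<le> 1" for y
    unfolding norm_of_real using measure_nonneg[of M W] prob_le_1[of W]
    by (auto simp: indicator_def)
  then have "L2 M (\<lambda>y. complex_of_real (indicator W y - measure M W))"
    using meas by (intro L2_bounded[OF finite_measure_axioms]) auto
  moreover have "(\<integral>y. indicator W y - measure M W \<partial>M) = 0"
    using W by (subst Bochner_Integration.integral_diff) (auto simp: prob_space emeasure_eq_measure)
  ultimately show ?thesis
    by (simp add: L2_0_def integral_complex_of_real[symmetric] del: of_real_diff)
qed

lemma lower_density_pos_if_decomposition:
  fixes u r :: "nat \<Rightarrow> complex" and c \<delta> :: real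
  defines "t \<equiv> c * \<delta> / 12"
  assumes c: "0 < c" and \<delta>: "0 < \<delta>"
    and dense: "\<And>N. N \<ge> N0 \<Longrightarrow> \<delta> * real N \<le> real (card (A \<inter> {1..N}))"
    and visits: "\<And>m. indicator R m = c + Re (u m) + Re (r m)"
    and u: "eventually (\<lambda>k. cmod (\<Sum>m\<in>A \<inter> {1..2 ^ k}. u m) \<le> t * 2 ^ k) sequentially"
    and r: "\<And>N. (\<Sum>n<N. (cmod (r n))\<^sup>2) \<le> t\<^sup>2 * real N"
  shows "0 < lower_density (R \<inter> A)"
proof -
  obtain K where K: "\<And>k. k \<ge> K \<Longrightarrow> cmod (\<Sum>m\<in>A \<inter> {1..2 ^ k}. u m) \<le> t * 2 ^ k"
    using u by (auto simp: eventually_sequentially)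
  show ?thesis
  proof (rule lower_density_pos_if_dyadic_bound[of "c * \<delta> / 2" "max K N0"])
    fix k
    assume k: "max K N0 \<le> k"
    have "N0 \<le> 2 ^ k" using k less_exp[of k] by linarith
    have "c * \<delta> / 2 * real (2 ^ k) \<le> (\<Sum>m\<in>A \<inter> {1..2 ^ k}. indicator R m)"
      using c \<delta> dense[OF \<open>N0 \<le> 2 ^ k\<close>] K[of k] k r[of "2 ^ k + 1"] visits
      unfolding t_def by (intro sum_ge_of_decomposition[where u=u and r=r]) auto
    then show "c * \<delta> / 2 * 2 ^ k \<le> real (card (R \<inter> A \<inter> {1..2 ^ k}))"
      by (simp add: card_Int_eq_sum_indicator Int_assoc)
  qed (use c \<delta> in simp)
qed

lemma AE_positive_lower_density_return_set_lebesgue_spectrum: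
  assumes S: "invertible_system M S" and leb: "lebesgue_spectrum M S"
    and W: "W \<in> sets M" "0 < measure M W" and A: "0 < lower_density A"
  shows "AE y in M. 0 < lower_density (return_set S y W \<inter> A)"
proof -
  have M: "prob_space M" and S_meas: "S \<in> measurable M M" and S_inv: "distr M M S = M"
    using S by (auto simp: invertible_system_def mp_system_def)
  interpret prob_space M by (rule M)
  define c where "c = measure M W"
  define h where "h y = complex_of_real (indicator W y - c)" for y
  have h: "L2_0 M h"
    unfolding h_def c_def by (rule L2_0_centered_indicator[OF M W(1)])
  have c: "0 < c" using W(2) by (simp add: c_def)
  obtain \<delta> N0 where \<delta>: "0 < \<delta>" and dense: "\<And>N. N \<ge> N0 \<Longrightarrow> \<delta> * real N \<le> real (card (A \<inter> {1..N}))"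
    using lower_density_pos_imp_eventually_ge[OF A] by blast
  define t where "t = c * \<delta> / 12"
  have t: "0 < t" using c \<delta> by (simp add: t_def)
  show ?thesis
  proof (rule AE_if_exceptional_sets_small[OF finite_measure_axioms])
    fix \<eta> :: real
    assume \<eta>: "0 < \<eta>"
    obtain u K where u: "L2 M u" and close: "(\<integral>y. (cmod (h y - u y))\<^sup>2 \<partial>M) < \<eta> * t\<^sup>2"
      and var: "orbit_sums_variance_le M S u K"
      using lebesgue_spectrum_approx[OF S leb h, of "\<eta> * t\<^sup>2"] \<eta> t by auto
    define r where "r y = h y - u y" for y
    have r: "L2 M r"
      unfolding r_def using L2_diff[OF _ u] h by (simp add: L2_0_def)
    obtain E where E: "E \<in> sets M" and E_le: "measure M E \<le> (\<integral>y. (cmod (r y))\<^sup>2 \<partial>M) / t\<^sup>2"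
      and E_means: "\<And>y N. y \<in> space M \<Longrightarrow> y \<notin> E \<Longrightarrow> (\<Sum>n<N. (cmod (r ((S ^^ n) y)))\<^sup>2) \<le> t\<^sup>2 * real N"
      using orbit_square_means_le_outside_small_set[OF finite_measure_axioms S_meas S_inv r t]
      by blast
    have "(\<integral>y. (cmod (r y))\<^sup>2 \<partial>M) / t\<^sup>2 < \<eta>"
      using close t by (simp add: r_def divide_less_eq)
    with E_le have E_small: "measure M E \<le> \<eta>" by linarith
    have "AE y in M.
        eventually (\<lambda>k. cmod (\<Sum>m\<in>A \<inter> {1..2 ^ k}. u ((S ^^ m) y)) \<le> t * 2 ^ k) sequentially"
      using u by (intro AE_eventually_dyadic_orbit_sums_le[OF finite_measure_axioms S_meas _ var t])
        (simp add: L2_def)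
    then obtain Z where Z_ev: "{y\<in>space M. \<not> eventually
        (\<lambda>k. cmod (\<Sum>m\<in>A \<inter> {1..2 ^ k}. u ((S ^^ m) y)) \<le> t * 2 ^ k) sequentially} \<subseteq> Z"
      and Z_null: "emeasure M Z = 0" and Z: "Z \<in> sets M"
      by (rule AE_E)
    have "0 < lower_density (return_set S y W \<inter> A)"
      if "y \<in> space M" "y \<notin> E" "y \<notin> Z" for y
    proof (rule lower_density_pos_if_decomposition[OF c \<delta> dense])
      show "indicator (return_set S y W) m = c + Re (u ((S ^^ m) y)) + Re (r ((S ^^ m) y))" for m
        by (simp add: return_set_def indicator_def r_def h_def)
      show "eventually
          (\<lambda>k. cmod (\<Sum>m\<in>A \<inter> {1..2 ^ k}. u ((S ^^ m) y)) \<le> c * \<delta> / 12 * 2 ^ k) sequentially"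
        using Z_ev that unfolding t_def by blast
      show "(\<Sum>n<N. (cmod (r ((S ^^ n) y)))\<^sup>2) \<le> (c * \<delta> / 12)\<^sup>2 * real N" for N
        using E_means[OF that(1,2)] by (simp add: t_def)
    qed
    then have "{y\<in>space M. \<not> 0 < lower_density (return_set S y W \<inter> A)} \<subseteq> E \<union> Z"
      by blast
    moreover have "measure M (E \<union> Z) \<le> \<eta>"
      using measure_Un_le[OF E Z] Z_null E_small by (simp add: emeasure_eq_measure)
    ultimately show "\<exists>Z'\<in>sets M. measure M Z' \<le> \<eta> \<and>
        {y\<in>space M. \<not> 0 < lower_density (return_set S y W \<inter> A)} \<subseteq> Z'"
      using E Z by blast
  qed
qed

section \<open>Passing to a factor\<close>

lemma AE_funpow:
  assumes S: "S \<in> measurable M M" "distr M M S = M" and P: "AE y in M. P y"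
  shows "AE y in M. P ((S ^^ n) y)"
proof -
  obtain Z where Z: "{y\<in>space M. \<not> P y} \<subseteq> Z" "emeasure M Z = 0" "Z \<in> sets M"
    using P by (rule AE_E)
  have Sn: "S ^^ n \<in> measurable M M" by (rule measurable_funpow[OF S(1)])
  have "emeasure M ((S ^^ n) -` Z \<inter> space M) = emeasure (distr M M (S ^^ n)) Z"
    by (rule emeasure_distr[OF Sn Z(3), symmetric])
  also have "\<dots> = 0" using distr_funpow[OF S] Z(2) by simp
  finally have "(S ^^ n) -` Z \<inter> space M \<in> null_sets M"
    using measurable_sets[OF Sn Z(3)] by auto
  moreover have "{y\<in>space M. \<not> P ((S ^^ n) y)} \<subseteq> (S ^^ n) -` Z \<inter> space M"
    using Z(1) measurable_space[OF Sn] by auto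
  ultimately show ?thesis by (rule AE_I')
qed

lemma AE_semiconjugacy_funpow:
  assumes S: "S \<in> measurable M M" "distr M M S = M" and comm: "AE y in M. \<pi> (S y) = T (\<pi> y)"
  shows "AE y in M. \<forall>n. \<pi> ((S ^^ n) y) = (T ^^ n) (\<pi> y)"
proof -
  have "AE y in M. \<forall>n. \<pi> (S ((S ^^ n) y)) = T (\<pi> ((S ^^ n) y))"
    using AE_funpow[OF S comm] by (simp add: AE_all_countable)
  then show ?thesis
  proof (rule AE_mp, intro AE_I2 impI allI)
    fix y n
    assume "\<forall>n. \<pi> (S ((S ^^ n) y)) = T (\<pi> ((S ^^ n) y))"
    then show "\<pi> ((S ^^ n) y) = (T ^^ n) (\<pi> y)" by (induction n) simp_all
  qed
qed

lemma measurable_positive_lower_density_return_set: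
  assumes T: "T \<in> measurable M M" and V: "V \<in> sets M"
  shows "{x\<in>space M. 0 < lower_density (return_set T x V \<inter> A)} \<in> sets M"
proof -
  have [measurable]: "(T ^^ n) \<in> measurable M M" for n by (rule measurable_funpow[OF T])
  have "real (card (return_set T x V \<inter> A \<inter> {1..N})) = (\<Sum>n\<in>A \<inter> {1..N}. indicator V ((T ^^ n) x))"
    for x N
    using card_Int_eq_sum_indicator[of "A \<inter> {1..N}" "return_set T x V"]
    by (simp add: Int_assoc return_set_def indicator_def)
  then have "lower_density (return_set T x V \<inter> A) =
      liminf (\<lambda>N. ereal ((\<Sum>n\<in>A \<inter> {1..N}. indicator V ((T ^^ n) x)) / real N))" for x
    by (simp add: lower_density_def)
  moreover have "(\<lambda>x. liminf (\<lambda>N. ereal ((\<Sum>n\<in>A \<inter> {1..N}. indicator V ((T ^^ n) x)) / real N)))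
      \<in> borel_measurable M"
    using V by measurable
  ultimately have [measurable]: "(\<lambda>x. lower_density (return_set T x V \<inter> A)) \<in> borel_measurable M"
    by simp
  show ?thesis by measurable
qed

lemma AE_positive_lower_density_return_set_factor:
  assumes T: "mp_system \<mu> T" and S: "invertible_system \<nu> S" and factor: "is_factor \<mu> T \<nu> S"
    and leb: "lebesgue_spectrum \<nu> S"
    and V: "V \<in> sets \<mu>" "0 < measure \<mu> V" and A: "0 < lower_density A"
  shows "AE x in \<mu>. 0 < lower_density (return_set T x V \<inter> A)"
proof -
  have T_meas: "T \<in> measurable \<mu> \<mu>" using T by (simp add: mp_system_def)
  have S_meas: "S \<in> measurable \<nu> \<nu>" "distr \<nu> \<nu> S = \<nu>"
    using S by (auto simp: invertible_system_def mp_system_def)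
  obtain \<pi> where \<pi>: "\<pi> \<in> measurable \<nu> \<mu>" and comm: "AE y in \<nu>. \<pi> (S y) = T (\<pi> y)"
    and image: "distr \<nu> \<mu> \<pi> = \<mu>"
    using factor unfolding is_factor_def by blast
  define W where "W = \<pi> -` V \<inter> space \<nu>"
  have W: "W \<in> sets \<nu>" unfolding W_def by (rule measurable_sets[OF \<pi> V(1)])
  have "measure \<nu> W = measure \<mu> V"
    using measure_distr[OF \<pi> V(1)] image unfolding W_def by simp
  then have "AE y in \<nu>. 0 < lower_density (return_set S y W \<inter> A)"
    using V(2)
    by (intro AE_positive_lower_density_return_set_lebesgue_spectrum[OF S leb W _ A]) simp
  moreover have "AE y in \<nu>. \<forall>n. \<pi> ((S ^^ n) y) = (T ^^ n) (\<pi> y)"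
    by (rule AE_semiconjugacy_funpow[OF S_meas comm])
  moreover have "AE y in \<nu>. y \<in> space \<nu>" by simp
  ultimately have "AE y in \<nu>. 0 < lower_density (return_set T (\<pi> y) V \<inter> A)"
  proof eventually_elim
    case (elim y)
    have "(S ^^ n) y \<in> space \<nu>" for n
      using measurable_space[OF measurable_funpow[OF S_meas(1)]] elim(3) by blast
    then have "return_set S y W = return_set T (\<pi> y) V"
      using elim(2) by (auto simp: return_set_def W_def)
    then show ?case using elim(1) by simp
  qed
  then have "AE x in distr \<nu> \<mu> \<pi>. 0 < lower_density (return_set T x V \<inter> A)"
    using measurable_positive_lower_density_return_set[OF T_meas V(1)]
    by (subst AE_distr_iff[OF \<pi>]) auto
  then show ?thesis unfolding image .
qed

theorem corollary3p3:
  fixes T :: "'a::{polish_space, real_vector} \<Rightarrow> 'a"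
    and \<mu> :: "'a measure"
    and \<nu> :: "'b::polish_space measure"
    and S :: "'b \<Rightarrow> 'b"
  assumes X_tvs: "polish_tvs TYPE('a)"
    and X_inf: "infinite_dimensional TYPE('a)"
    and T_lin: "linear T" and T_cont: "continuous_on UNIV T"
    and mu_borel: "sets \<mu> = sets borel"
    and mu_inv: "mp_system \<mu> T"
    and mu_full: "\<And>U. open U \<Longrightarrow> U \<noteq> {} \<Longrightarrow> emeasure \<mu> U > 0"
    and nu_borel: "sets \<nu> = sets borel"
    and S_inv: "invertible_system \<nu> S"
    and factor: "is_factor \<mu> T \<nu> S"
    and leb: "lebesgue_spectrum \<nu> S"
  shows "hereditarily_frequently_hypercyclic T \<and>
    (\<forall>(I::nat set) (A::nat \<Rightarrow> nat set) (V::nat \<Rightarrow> 'a set).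
        (\<forall>i\<in>I. open (V i) \<and> V i \<noteq> {} \<and> lower_density (A i) > 0) \<longrightarrow>
        (AE x in \<mu>. \<forall>i\<in>I. lower_density (return_set T x (V i) \<inter> A i) > 0))"
proof -
  interpret prob_space \<mu> using mu_inv by (simp add: mp_system_def)
  have AE_all: "AE x in \<mu>. \<forall>i\<in>I. lower_density (return_set T x (V i) \<inter> A i) > 0"
    if "\<forall>i\<in>I. open (V i) \<and> V i \<noteq> {} \<and> lower_density (A i) > 0"
    for I :: "nat set" and A :: "nat \<Rightarrow> nat set" and V :: "nat \<Rightarrow> 'a set"
  proof (subst AE_ball_countable[OF countableI_type], intro ballI)
    fix i
    assume "i \<in> I"
    with that have "V i \<in> sets \<mu>" "0 < measure \<mu> (V i)" "0 < lower_density (A i)"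
      using mu_full[of "V i"] mu_borel by (auto simp: emeasure_eq_measure)
    then show "AE x in \<mu>. 0 < lower_density (return_set T x (V i) \<inter> A i)"
      by (rule AE_positive_lower_density_return_set_factor[OF mu_inv S_inv factor leb])
  qed
  have "hereditarily_frequently_hypercyclic T"
    unfolding hereditarily_frequently_hypercyclic_def
    using eventually_happens[OF AE_all] ae_filter_bot by blast
  with AE_all show ?thesis by blast
qed

end
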